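(* If $\|\phi_0\|_{L^2(P_0;\mathcal{H})}<\infty$ and $\|\phi_n^j-\phi_0\|_{L^2(P_0;\mathcal{H})}=o_p(1)$ for each $j\in\{1,2\}$, then $\|\phi_n^j\|_{L^2(P_n^j;\mathcal{H})}^2\to\|\phi_0\|_{L^2(P_0;\mathcal{H})}^2$ in probability for each $j\in\{1,2\}$, and consequently $\frac12\sum_{j=1}^2\|\phi_n^j\|_{L^2(P_n^j;\mathcal{H})}^2\to\|\phi_0\|_{L^2(P_0;\mathcal{H})}^2$ in probability.
   Context: $(\mathcal{Z},\mathbf{B})$ is a Polish space, $\mathcal{H}$ a real separable Hilbert space, $P_0$ a distribution on $\mathcal{Z}$, $\phi_0:\mathcal{Z}\to\mathcal{H}$ Bochner measurable (the efficient influence function at $P_0$ in the paper). For a distribution $Q$, $\|f\|_{L^2(Q;\mathcal{H})}^2=\int\|f(z)\|_{\mathcal{H}}^2Q(dz)$. Cross-fitting: $n$ even, $Z_1,\dots,Z_n$ iid $P_0$; $P_n^1$ is the empirical distribution of $Z_{n/2+1},\dots,Z_n$ and $P_n^2$ that of $Z_1,\dots,Z_{n/2}$; $\phi_n^1:\mathcal{Z}\to\mathcal{H}$ is a Bochner measurable function determined by $Z_1,\dots,Z_{n/2}$ and $\phi_n^2$ one determined by $Z_{n/2+1},\dots,Z_n$ (the efficient influence functions at the cross-fitted estimates of $P_0$ in the paper). *)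

theory Defs
  imports "HOL-Probability.Probability"
begin

definition L2sq :: "'z measure \<Rightarrow> ('z \<Rightarrow> 'h::real_normed_vector) \<Rightarrow> ennreal" where
  "L2sq Q f = (\<integral>\<^sup>+ z. ennreal ((norm (f z))\<^sup>2) \<partial>Q)"

text \<open>Squared norm of f in L^2 of the empirical distribution of the sample points
  X i, i in I (I finite and nonempty): the average of the squared norms.\<close>
definition empL2sq :: "nat set \<Rightarrow> (nat \<Rightarrow> 'z) \<Rightarrow> ('z \<Rightarrow> 'h::real_normed_vector) \<Rightarrow> real" where
  "empL2sq I X f = (\<Sum>i\<in>I. (norm (f (X i)))\<^sup>2) / real (card I)"

definition even_seq :: "nat filter" where
  "even_seq = inf sequentially (principal {n. even n})"

definition conv_in_prob :: "'a measure \<Rightarrow> 'i filter \<Rightarrow> ('i \<Rightarrow> 'a \<Rightarrow> real) \<Rightarrow> real \<Rightarrow> bool" where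
  "conv_in_prob M F Y c \<longleftrightarrow>
     (\<forall>\<epsilon>>0. ((\<lambda>n. measure M {\<omega>\<in>space M. \<epsilon> < \<bar>Y n \<omega> - c\<bar>}) \<longlongrightarrow> 0) F)"

definition op1_enn :: "'a measure \<Rightarrow> 'i filter \<Rightarrow> ('i \<Rightarrow> 'a \<Rightarrow> ennreal) \<Rightarrow> bool" where
  "op1_enn M F Y \<longleftrightarrow>
     (\<forall>\<epsilon>>0. ((\<lambda>n. measure M {\<omega>\<in>space M. ennreal \<epsilon> < Y n \<omega>}) \<longlongrightarrow> 0) F)"

end

theory Submission
  imports Defs
begin

text \<open>For \<open>t > 0\<close>, Cauchy-Schwarz gives
  \<open>|\<parallel>a + b\<parallel>\<^sup>2 - \<parallel>a\<parallel>\<^sup>2| \<le> t \<parallel>a\<parallel>\<^sup>2 + (1 + 1/t) \<parallel>b\<parallel>\<^sup>2\<close>. Averaging this over the half of the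
  sample on which \<open>\<phi>\<^sub>n\<^sup>j\<close> is evaluated, with \<open>a = \<phi>\<^sub>0\<close> and \<open>b = \<phi>\<^sub>n\<^sup>j - \<phi>\<^sub>0\<close>, reduces the
  claim to two facts. First, the empirical mean of \<open>\<parallel>\<phi>\<^sub>0\<parallel>\<^sup>2\<close> converges in probability to its
  \<open>P\<^sub>0\<close>-mean: a weak law of large numbers, obtained from Hoeffding's inequality after
  truncating the integrable function \<open>\<parallel>\<phi>\<^sub>0\<parallel>\<^sup>2\<close>. Second, the empirical mean of
  \<open>\<parallel>\<phi>\<^sub>n\<^sup>j - \<phi>\<^sub>0\<parallel>\<^sup>2\<close> is \<open>o\<^sub>p(1)\<close>: \<open>\<phi>\<^sub>n\<^sup>j\<close> is built from the other half of the sample, so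
  conditionally on that half each term has mean \<open>\<parallel>\<phi>\<^sub>n\<^sup>j - \<phi>\<^sub>0\<parallel>\<^sup>2\<close> in \<open>L\<^sup>2(P\<^sub>0)\<close>, and Markov's
  inequality on the event where this conditional mean is small transfers the \<open>o\<^sub>p(1)\<close>
  hypothesis.\<close>

lemma norm_add_sq_diff_le:
  fixes a b :: "'h::real_inner"
  assumes t: "t > 0"
  shows "\<bar>(norm (a + b))\<^sup>2 - (norm a)\<^sup>2\<bar> \<le> t * (norm a)\<^sup>2 + (1 + 1/t) * (norm b)\<^sup>2"
proof -
  have expand: "(norm (a + b))\<^sup>2 - (norm a)\<^sup>2 = 2 * (a \<bullet> b) + (norm b)\<^sup>2"
    by (simp add: power2_norm_eq_inner algebra_simps inner_commute)
  have "\<bar>a \<bullet> b\<bar> \<le> norm a * norm b" by (rule Cauchy_Schwarz_ineq2)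
  moreover have "2 * (norm a * norm b) \<le> t * (norm a)\<^sup>2 + (1/t) * (norm b)\<^sup>2"
  proof -
    have "0 \<le> (t * norm a - norm b)\<^sup>2" by simp
    hence "t * (2 * (norm a * norm b)) \<le> t * (t * (norm a)\<^sup>2 + (1/t) * (norm b)\<^sup>2)"
      using t by (simp add: power2_eq_square algebra_simps)
    thus ?thesis using t by (simp add: mult_le_cancel_left_pos)
  qed
  moreover have "\<bar>2 * (a \<bullet> b) + (norm b)\<^sup>2\<bar> \<le> 2 * \<bar>a \<bullet> b\<bar> + (norm b)\<^sup>2"
    using abs_triangle_ineq[of "2 * (a \<bullet> b)" "(norm b)\<^sup>2"] by simp
  moreover have "(1 + 1/t) * (norm b)\<^sup>2 = (norm b)\<^sup>2 + (1/t) * (norm b)\<^sup>2"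
    by (simp add: algebra_simps)
  ultimately show ?thesis unfolding expand by linarith
qed

lemma empL2sq_diff_le:
  fixes f f0 :: "'z \<Rightarrow> 'h::real_inner"
  assumes t: "t > 0"
  shows "\<bar>empL2sq I X f - empL2sq I X f0\<bar>
           \<le> t * \<bar>empL2sq I X f0\<bar> + (1 + 1/t) * empL2sq I X (\<lambda>z. f z - f0 z)"
proof -
  define x where "x i = (norm (f (X i)))\<^sup>2" for i
  define y where "y i = (norm (f0 (X i)))\<^sup>2" for i
  define d where "d i = (norm (f (X i) - f0 (X i)))\<^sup>2" for i
  define N where "N = real (card I)"
  have N: "N \<ge> 0" unfolding N_def by simp
  have "\<bar>sum x I - sum y I\<bar> \<le> (\<Sum>i\<in>I. \<bar>x i - y i\<bar>)"
    by (metis sum_abs sum_subtractf)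
  also have "\<dots> \<le> (\<Sum>i\<in>I. t * y i + (1 + 1/t) * d i)"
    using norm_add_sq_diff_le[OF t, of "f0 (X i)" "f (X i) - f0 (X i)" for i]
    by (intro sum_mono) (simp add: x_def y_def d_def)
  also have "\<dots> = t * sum y I + (1 + 1/t) * sum d I" by (simp add: sum.distrib sum_distrib_left)
  finally have "\<bar>sum x I - sum y I\<bar> / N \<le> (t * sum y I + (1 + 1/t) * sum d I) / N"
    using N by (rule divide_right_mono)
  moreover have "0 \<le> sum y I" unfolding y_def by (auto intro: sum_nonneg)
  ultimately show ?thesis
    using N by (simp add: empL2sq_def x_def y_def d_def N_def
        diff_divide_distrib[symmetric] add_divide_distrib)
qed

lemma (in finite_measure) measure_le_measure_Un:
  assumes "S \<subseteq> A \<union> B" "A \<in> sets M" "B \<in> sets M"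
  shows "measure M S \<le> measure M A + measure M B"
proof -
  have "measure M S \<le> measure M (A \<union> B)" using assms by (intro finite_measure_mono) auto
  also have "\<dots> \<le> measure M A + measure M B" using assms(2,3) by (rule measure_Un_le)
  finally show ?thesis .
qed

lemma measure_tendsto_0I:
  assumes "\<And>\<eta>. \<eta> > 0 \<Longrightarrow> \<forall>\<^sub>F n in F. measure M (S n) < \<eta>"
  shows "((\<lambda>n. measure M (S n)) \<longlongrightarrow> 0) F"
proof (rule order_tendstoI)
  show "\<forall>\<^sub>F n in F. a < measure M (S n)" if "a < 0" for a
    using that by (intro always_eventually) (auto intro: less_le_trans[OF _ measure_nonneg])
qed (rule assms)

lemma measure_tendsto_0_subset_Un:
  assumes "finite_measure M"
    and "\<And>n. S n \<subseteq> A n \<union> B n" "\<And>n. A n \<in> sets M" "\<And>n. B n \<in> sets M"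
    and "((\<lambda>n. measure M (A n)) \<longlongrightarrow> 0) F" "((\<lambda>n. measure M (B n)) \<longlongrightarrow> 0) F"
  shows "((\<lambda>n. measure M (S n)) \<longlongrightarrow> 0) F"
proof (rule tendsto_sandwich[OF _ _ tendsto_const tendsto_add_zero[OF assms(5,6)]])
  show "\<forall>\<^sub>F n in F. measure M (S n) \<le> measure M (A n) + measure M (B n)"
    using finite_measure.measure_le_measure_Un[OF assms(1-4)] by simp
qed simp

lemma conv_in_prob_cover:
  assumes M: "prob_space M"
    and [measurable]: "\<And>n. B n \<in> borel_measurable M" "\<And>n. C n \<in> borel_measurable M"
    and B: "conv_in_prob M F B b" and C: "conv_in_prob M F C c"
    and cover: "\<And>\<epsilon>. \<epsilon> > 0 \<Longrightarrow> \<exists>\<delta>>0. \<forall>n. \<forall>\<omega>\<in>space M.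
                  \<epsilon> < \<bar>A n \<omega> - a\<bar> \<longrightarrow> \<delta> < \<bar>B n \<omega> - b\<bar> \<or> \<delta> < \<bar>C n \<omega> - c\<bar>"
  shows "conv_in_prob M F A a"
  unfolding conv_in_prob_def
proof (intro allI impI)
  fix \<epsilon> :: real assume "\<epsilon> > 0"
  from cover[OF this] obtain \<delta> where \<delta>: "\<delta> > 0" and cov: "\<forall>n. \<forall>\<omega>\<in>space M.
      \<epsilon> < \<bar>A n \<omega> - a\<bar> \<longrightarrow> \<delta> < \<bar>B n \<omega> - b\<bar> \<or> \<delta> < \<bar>C n \<omega> - c\<bar>"
    by blast
  have "{\<omega>\<in>space M. \<epsilon> < \<bar>A n \<omega> - a\<bar>}
      \<subseteq> {\<omega>\<in>space M. \<delta> < \<bar>B n \<omega> - b\<bar>} \<union> {\<omega>\<in>space M. \<delta> < \<bar>C n \<omega> - c\<bar>}" for n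
    using cov by blast
  moreover have "{\<omega>\<in>space M. \<delta> < \<bar>B n \<omega> - b\<bar>} \<in> sets M" "{\<omega>\<in>space M. \<delta> < \<bar>C n \<omega> - c\<bar>} \<in> sets M"
    for n by measurable
  moreover have "((\<lambda>n. measure M {\<omega>\<in>space M. \<delta> < \<bar>B n \<omega> - b\<bar>}) \<longlongrightarrow> 0) F"
    "((\<lambda>n. measure M {\<omega>\<in>space M. \<delta> < \<bar>C n \<omega> - c\<bar>}) \<longlongrightarrow> 0) F"
    using B C \<delta> unfolding conv_in_prob_def by simp_all
  ultimately show "((\<lambda>n. measure M {\<omega>\<in>space M. \<epsilon> < \<bar>A n \<omega> - a\<bar>}) \<longlongrightarrow> 0) F"
    by (rule measure_tendsto_0_subset_Un[OF prob_space.finite_measure[OF M]])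
qed

lemma conv_in_prob_perturb:
  assumes M: "prob_space M"
    and bound: "\<And>n \<omega> t. \<omega> \<in> space M \<Longrightarrow> t > 0 \<Longrightarrow>
                  \<bar>A n \<omega> - B n \<omega>\<bar> \<le> t * \<bar>B n \<omega>\<bar> + (1 + 1/t) * D n \<omega>"
    and B_meas: "\<And>n. B n \<in> borel_measurable M" and D_meas: "\<And>n. D n \<in> borel_measurable M"
    and B: "conv_in_prob M F B c" and D: "conv_in_prob M F D 0"
  shows "conv_in_prob M F A c"
proof (rule conv_in_prob_cover[OF M B_meas D_meas B D])
  fix \<epsilon> :: real assume \<epsilon>: "\<epsilon> > 0"
  define t where "t = \<epsilon> / (3 * (\<bar>c\<bar> + 1))"
  define s where "s = 1 + 1/t"
  define \<delta> where "\<delta> = min (min (\<epsilon>/3) 1) (\<epsilon> / (3 * s))"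
  have t: "t > 0" unfolding t_def using \<epsilon> by (intro divide_pos_pos) auto
  have s: "s > 0" unfolding s_def using t by (intro add_pos_pos) auto
  have \<delta>: "\<delta> > 0" unfolding \<delta>_def using \<epsilon> s by simp
  have t_bound: "t * (\<bar>c\<bar> + 1) = \<epsilon>/3" unfolding t_def by (simp add: field_simps)
  have s_bound: "s * \<delta> \<le> \<epsilon>/3"
    using mult_left_mono[of \<delta> "\<epsilon> / (3 * s)" s] s unfolding \<delta>_def by simp
  show "\<exists>\<delta>>0. \<forall>n. \<forall>\<omega>\<in>space M. \<epsilon> < \<bar>A n \<omega> - c\<bar> \<longrightarrow> \<delta> < \<bar>B n \<omega> - c\<bar> \<or> \<delta> < \<bar>D n \<omega> - 0\<bar>"
  proof (intro exI[of _ \<delta>] conjI \<delta> allI ballI impI, rule ccontr)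
    fix n \<omega> assume \<omega>: "\<omega> \<in> space M" and far: "\<epsilon> < \<bar>A n \<omega> - c\<bar>"
      and "\<not> (\<delta> < \<bar>B n \<omega> - c\<bar> \<or> \<delta> < \<bar>D n \<omega> - 0\<bar>)"
    then have near: "\<bar>B n \<omega> - c\<bar> \<le> \<delta>" "D n \<omega> \<le> \<delta>" by auto
    have "\<bar>B n \<omega>\<bar> \<le> \<bar>c\<bar> + 1" using near(1) unfolding \<delta>_def by linarith
    then have "t * \<bar>B n \<omega>\<bar> \<le> \<epsilon>/3" using mult_left_mono[of _ _ t] t t_bound by fastforce
    moreover have "s * D n \<omega> \<le> \<epsilon>/3"
      using mult_left_mono[OF near(2) less_imp_le[OF s]] s_bound by linarith
    moreover have "\<bar>A n \<omega> - B n \<omega>\<bar> \<le> t * \<bar>B n \<omega>\<bar> + s * D n \<omega>"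
      using bound[OF \<omega> t, of n] unfolding s_def .
    moreover have "\<delta> \<le> \<epsilon>/3" unfolding \<delta>_def by simp
    ultimately show False using near(1) far by linarith
  qed
qed

lemma conv_in_prob_midpoint:
  assumes M: "prob_space M"
    and A_meas: "\<And>n. A n \<in> borel_measurable M" and B_meas: "\<And>n. B n \<in> borel_measurable M"
    and A: "conv_in_prob M F A c" and B: "conv_in_prob M F B c"
  shows "conv_in_prob M F (\<lambda>n \<omega>. (1/2) * (A n \<omega> + B n \<omega>)) c"
proof (rule conv_in_prob_cover[OF M A_meas B_meas A B])
  fix \<epsilon> :: real assume "\<epsilon> > 0"
  have "\<epsilon> < \<bar>(1/2) * (a + b) - c\<bar> \<Longrightarrow> \<epsilon> < \<bar>a - c\<bar> \<or> \<epsilon> < \<bar>b - c\<bar>" for a b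
    by (simp add: field_simps) arith
  with \<open>\<epsilon> > 0\<close> show "\<exists>\<delta>>0. \<forall>n. \<forall>\<omega>\<in>space M.
      \<epsilon> < \<bar>(1/2) * (A n \<omega> + B n \<omega>) - c\<bar> \<longrightarrow> \<delta> < \<bar>A n \<omega> - c\<bar> \<or> \<delta> < \<bar>B n \<omega> - c\<bar>"
    by (intro exI[of _ \<epsilon>] conjI allI ballI impI)
qed

lemma integrable_truncation_tail:
  fixes f :: "'z \<Rightarrow> real"
  assumes f: "integrable N f" and f_nonneg: "\<And>x. 0 \<le> f x" and \<delta>: "\<delta> > 0"
  obtains K where "K > 0" "(\<integral>x. f x - min (f x) K \<partial>N) < \<delta>"
proof -
  have [measurable]: "f \<in> borel_measurable N" using f by auto
  have "(\<lambda>K::nat. \<integral>x. f x - min (f x) (real K) \<partial>N) \<longlonglongrightarrow> (\<integral>x. 0 \<partial>N)"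
  proof (rule integral_dominated_convergence[where w = f])
    show "AE x in N. (\<lambda>K::nat. f x - min (f x) (real K)) \<longlonglongrightarrow> 0"
    proof (intro AE_I2 tendsto_eventually)
      fix x
      show "\<forall>\<^sub>F K in sequentially. f x - min (f x) (real K) = 0"
        using eventually_ge_at_top[of "nat \<lceil>f x\<rceil>"]
        by eventually_elim (use real_nat_ceiling_ge[of "f x"] in linarith)
    qed
    show "AE x in N. norm (f x - min (f x) (real K)) \<le> f x" for K
      using f_nonneg by (intro AE_I2) (auto simp: min_def)
  qed (use f in measurable)
  then have "\<forall>\<^sub>F K in sequentially. (\<integral>x. f x - min (f x) (real K) \<partial>N) < \<delta>"
    using \<delta> by (intro order_tendstoD(2)) auto
  then obtain K0 where "\<And>K. K \<ge> K0 \<Longrightarrow> (\<integral>x. f x - min (f x) (real K) \<partial>N) < \<delta>"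
    by (auto simp: eventually_sequentially)
  from this[of "Suc K0"] show ?thesis by (intro that[of "real (Suc K0)"]) auto
qed

lemma tendsto_exp_neg_mult_at_top:
  fixes g :: "'i \<Rightarrow> nat"
  assumes "c > 0" and g: "filterlim g at_top F"
  shows "((\<lambda>n. exp (- c * real (g n))) \<longlongrightarrow> 0) F"
proof -
  have "filterlim (\<lambda>n. - c * real (g n)) at_bot F"
    using \<open>c > 0\<close> filterlim_compose[OF filterlim_real_sequentially g]
    by (intro filterlim_tendsto_neg_mult_at_bot[OF tendsto_const]) auto
  then show ?thesis by (rule filterlim_compose[OF exp_at_bot])
qed

locale iid_sample = prob_space M
  for M :: "'a measure" and P0 :: "'z measure" and Z :: "nat \<Rightarrow> 'a \<Rightarrow> 'z" +
  assumes indep_Z: "indep_vars (\<lambda>_. P0) Z UNIV"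
    and distr_Z: "\<And>i. distr M P0 (Z i) = P0"
begin

lemma measurable_Z [measurable]: "Z i \<in> measurable M P0"
  using indep_Z unfolding indep_vars_def by auto

sublocale P0: prob_space P0
  using prob_space_distr[OF measurable_Z] distr_Z by metis

lemma distr_comp_Z:
  assumes "h \<in> measurable P0 N"
  shows "distr M N (\<lambda>\<omega>. h (Z i \<omega>)) = distr P0 N h"
  using distr_distr[OF assms measurable_Z, of i] distr_Z by (simp add: comp_def)

lemma integrable_comp_Z:
  fixes f :: "'z \<Rightarrow> real"
  assumes "integrable P0 f" "f \<in> borel_measurable P0"
  shows "integrable M (\<lambda>\<omega>. f (Z i \<omega>))"
  using integrable_distr_eq[OF measurable_Z assms(2), of i] assms(1) distr_Z by simp

lemma integral_comp_Z:
  fixes f :: "'z \<Rightarrow> real"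
  assumes "f \<in> borel_measurable P0"
  shows "(\<integral>\<omega>. f (Z i \<omega>) \<partial>M) = (\<integral>x. f x \<partial>P0)"
  using integral_distr[OF measurable_Z assms, of i] distr_Z by simp

lemma Hoeffding_sample_mean:
  assumes [measurable]: "h \<in> borel_measurable P0"
    and h: "\<And>x. 0 \<le> h x" "\<And>x. h x \<le> K" and K: "K > 0"
    and I: "finite I" "I \<noteq> {}" and e: "e \<ge> 0"
  shows "measure M {\<omega>\<in>space M. e \<le> \<bar>(\<Sum>i\<in>I. h (Z i \<omega>)) / real (card I) - (\<integral>x. h x \<partial>P0)\<bar>}
           \<le> 2 * exp (- 2 * real (card I) * e\<^sup>2 / K\<^sup>2)"
proof -
  interpret H: Hoeffding_ineq_iid M I "\<lambda>i \<omega>. h (Z i \<omega>)" "\<lambda>\<omega>. h (Z 0 \<omega>)" 0 K "\<integral>x. h x \<partial>P0"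
  proof unfold_locales
    show "finite I" by fact
    show "indep_vars (\<lambda>_. borel) (\<lambda>i \<omega>. h (Z i \<omega>)) I"
      by (rule indep_vars_compose2[OF indep_vars_subset[OF indep_Z]]) auto
    show "distr M borel (\<lambda>\<omega>. h (Z i \<omega>)) = distr M borel (\<lambda>\<omega>. h (Z 0 \<omega>))" for i
      by (simp add: distr_comp_Z)
    show "random_variable borel (\<lambda>\<omega>. h (Z 0 \<omega>))" by measurable
    show "AE \<omega> in M. h (Z 0 \<omega>) \<in> {0..K}" using h by simp
    show "(\<integral>x. h x \<partial>P0) \<equiv> expectation (\<lambda>\<omega>. h (Z 0 \<omega>))"
      by (simp add: integral_comp_Z)
  qed
  show ?thesis using H.Hoeffding_ineq_abs_ge'[OF e K I(2)] by simp
qed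

lemma measure_sample_mean_deviation_le:
  assumes [measurable]: "f \<in> borel_measurable P0"
    and f_nonneg: "\<And>x. 0 \<le> f x" and f_int: "integrable P0 f"
    and K: "K > 0" and \<epsilon>: "\<epsilon> > 0" and tail: "(\<integral>x. f x - min (f x) K \<partial>P0) \<le> \<epsilon>/3"
    and I: "finite I" "I \<noteq> {}"
  shows "measure M {\<omega>\<in>space M. \<epsilon> < \<bar>(\<Sum>i\<in>I. f (Z i \<omega>)) / real (card I) - (\<integral>x. f x \<partial>P0)\<bar>}
     \<le> 2 * exp (- 2 * real (card I) * (\<epsilon>/3)\<^sup>2 / K\<^sup>2) + 3 * (\<integral>x. f x - min (f x) K \<partial>P0) / \<epsilon>"
proof -
  define h where "h x = min (f x) K" for x
  define r where "r x = f x - h x" for x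
  define mean where "mean u \<omega> = (\<Sum>i\<in>I. u (Z i \<omega>)) / real (card I)" for u \<omega>
  have [measurable]: "h \<in> borel_measurable P0" "r \<in> borel_measurable P0"
    unfolding h_def r_def by measurable
  have r_nonneg: "0 \<le> r x" for x unfolding r_def h_def by simp
  have h_int: "integrable P0 h"
    by (rule P0.integrable_const_bound[where B = K]) (use f_nonneg K in \<open>auto simp: h_def\<close>)
  have r_int: "integrable P0 r" unfolding r_def using f_int h_int by auto
  define T1 where "T1 = {\<omega>\<in>space M. \<epsilon>/3 \<le> \<bar>mean h \<omega> - (\<integral>x. h x \<partial>P0)\<bar>}"
  define T2 where "T2 = {\<omega>\<in>space M. \<epsilon>/3 \<le> mean r \<omega>}"
  have "\<epsilon> < \<bar>mean f \<omega> - (\<integral>x. f x \<partial>P0)\<bar> \<Longrightarrow> \<omega> \<in> T1 \<union> T2" if "\<omega> \<in> space M" for \<omega>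
  proof -
    have "mean f \<omega> = mean h \<omega> + mean r \<omega>"
      by (simp add: mean_def r_def sum_subtractf diff_divide_distrib)
    moreover have "(\<integral>x. f x \<partial>P0) = (\<integral>x. h x \<partial>P0) + (\<integral>x. r x \<partial>P0)"
      using f_int h_int by (simp add: r_def)
    moreover have "0 \<le> mean r \<omega>" unfolding mean_def by (simp add: r_nonneg sum_nonneg)
    moreover have "0 \<le> (\<integral>x. r x \<partial>P0)" by (simp add: r_nonneg)
    moreover have "(\<integral>x. r x \<partial>P0) \<le> \<epsilon>/3" using tail by (simp add: r_def h_def)
    ultimately show "\<epsilon> < \<bar>mean f \<omega> - (\<integral>x. f x \<partial>P0)\<bar> \<Longrightarrow> \<omega> \<in> T1 \<union> T2"
      using that by (auto simp: T1_def T2_def abs_if split: if_splits)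
  qed
  then have "{\<omega>\<in>space M. \<epsilon> < \<bar>mean f \<omega> - (\<integral>x. f x \<partial>P0)\<bar>} \<subseteq> T1 \<union> T2" by blast
  then have "measure M {\<omega>\<in>space M. \<epsilon> < \<bar>mean f \<omega> - (\<integral>x. f x \<partial>P0)\<bar>} \<le> measure M T1 + measure M T2"
    by (rule measure_le_measure_Un) (simp_all add: T1_def T2_def mean_def)
  also have "measure M T1 \<le> 2 * exp (- 2 * real (card I) * (\<epsilon>/3)\<^sup>2 / K\<^sup>2)"
    unfolding T1_def mean_def
    by (rule Hoeffding_sample_mean) (use f_nonneg K I \<epsilon> in \<open>auto simp: h_def\<close>)
  also have "measure M T2 \<le> (\<integral>\<omega>. mean r \<omega> \<partial>M) / (\<epsilon>/3)"
    unfolding T2_def using r_int \<epsilon>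
    by (intro integral_Markov_inequality_measure[OF _ sets.top])
       (auto simp: mean_def r_nonneg integrable_comp_Z
         intro!: AE_I2 sum_nonneg divide_nonneg_nonneg)
  also have "(\<integral>\<omega>. mean r \<omega> \<partial>M) = (\<integral>x. r x \<partial>P0)"
    using I r_int by (simp add: mean_def integral_sum integrable_comp_Z integral_comp_Z)
  finally show ?thesis by (simp add: mean_def r_def h_def mult.commute)
qed

lemma conv_in_prob_sample_mean:
  assumes f_meas: "f \<in> borel_measurable P0"
    and f_nonneg: "\<And>x. 0 \<le> f x" and f_int: "integrable P0 f"
    and I: "\<And>n. finite (I n)" and card: "filterlim (\<lambda>n. card (I n)) at_top F"
  shows "conv_in_prob M F (\<lambda>n \<omega>. (\<Sum>i\<in>I n. f (Z i \<omega>)) / real (card (I n))) (\<integral>x. f x \<partial>P0)"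
  unfolding conv_in_prob_def
proof (intro allI impI measure_tendsto_0I)
  fix \<epsilon> \<eta> :: real assume \<epsilon>: "\<epsilon> > 0" and \<eta>: "\<eta> > 0"
  obtain K where K: "K > 0" and tail: "(\<integral>x. f x - min (f x) K \<partial>P0) < min (\<epsilon>/3) (\<epsilon> * \<eta> / 6)"
    using integrable_truncation_tail[OF f_int f_nonneg, of "min (\<epsilon>/3) (\<epsilon> * \<eta> / 6)"] \<epsilon> \<eta> by auto
  have markov: "3 * (\<integral>x. f x - min (f x) K \<partial>P0) / \<epsilon> < \<eta>/2"
    using tail \<epsilon> by (simp add: field_simps)
  define c where "c = 2 * (\<epsilon>/3)\<^sup>2 / K\<^sup>2"
  have "c > 0" using \<epsilon> K by (simp add: c_def)
  have "((\<lambda>n. 2 * exp (- c * real (card (I n)))) \<longlongrightarrow> 0) F"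
    by (rule tendsto_mult_right_zero[OF tendsto_exp_neg_mult_at_top[OF \<open>c > 0\<close> card]])
  then have "\<forall>\<^sub>F n in F. 2 * exp (- c * real (card (I n))) < \<eta>/2"
    using \<eta> by (intro order_tendstoD(2)) auto
  moreover have "\<forall>\<^sub>F n in F. 1 \<le> card (I n)"
    using card unfolding filterlim_at_top by blast
  ultimately show "\<forall>\<^sub>F n in F. measure M {\<omega>\<in>space M.
      \<epsilon> < \<bar>(\<Sum>i\<in>I n. f (Z i \<omega>)) / real (card (I n)) - (\<integral>x. f x \<partial>P0)\<bar>} < \<eta>"
  proof eventually_elim
    case (elim n)
    then have "I n \<noteq> {}" by auto
    have "measure M {\<omega>\<in>space M.
        \<epsilon> < \<bar>(\<Sum>i\<in>I n. f (Z i \<omega>)) / real (card (I n)) - (\<integral>x. f x \<partial>P0)\<bar>}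
      \<le> 2 * exp (- 2 * real (card (I n)) * (\<epsilon>/3)\<^sup>2 / K\<^sup>2) + 3 * (\<integral>x. f x - min (f x) K \<partial>P0) / \<epsilon>"
      using tail
      by (intro measure_sample_mean_deviation_le[OF f_meas f_nonneg f_int K \<epsilon> _ I \<open>I n \<noteq> {}\<close>]) simp
    also have "- 2 * real (card (I n)) * (\<epsilon>/3)\<^sup>2 / K\<^sup>2 = - c * real (card (I n))"
      by (simp add: c_def)
    finally show ?case using elim(1) markov by linarith
  qed
qed

lemma measurable_restrict_Z: "(\<lambda>\<omega>. restrict (\<lambda>j. Z j \<omega>) J) \<in> measurable M (PiM J (\<lambda>_. P0))"
  by (intro measurable_restrict measurable_Z)

lemma measurable_comp_restrict_Z:
  assumes "(\<lambda>(x, z). G x z) \<in> measurable (PiM J (\<lambda>_. P0) \<Otimes>\<^sub>M P0) N"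
  shows "(\<lambda>\<omega>. G (restrict (\<lambda>j. Z j \<omega>) J) (Z i \<omega>)) \<in> measurable M N"
  using measurable_comp[OF measurable_Pair[OF measurable_restrict_Z measurable_Z] assms]
  by (simp add: comp_def)

lemma measurable_empL2sq_cross_fit:
  fixes G :: "(nat \<Rightarrow> 'z) \<Rightarrow> 'z \<Rightarrow> 'h::real_normed_vector"
  assumes "(\<lambda>(x, z). G x z) \<in> borel_measurable (PiM J (\<lambda>_. P0) \<Otimes>\<^sub>M P0)"
  shows "(\<lambda>\<omega>. empL2sq I (\<lambda>i. Z i \<omega>) (G (restrict (\<lambda>j. Z j \<omega>) J))) \<in> borel_measurable M"
  unfolding empL2sq_def using measurable_comp_restrict_Z[OF assms] by measurable

lemma distr_restrict_Z:
  assumes "K \<noteq> {}"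
  shows "distr M (PiM K (\<lambda>_. P0)) (\<lambda>\<omega>. restrict (\<lambda>j. Z j \<omega>) K) = PiM K (\<lambda>_. P0)"
proof -
  have "indep_vars (\<lambda>_. P0) Z K" by (rule indep_vars_subset[OF indep_Z]) auto
  then show ?thesis
    using indep_vars_iff_distr_eq_PiM'[where I = K and X = Z and M' = "\<lambda>_. P0"] assms
    by (simp add: distr_Z)
qed

lemma nn_integral_restrict_Z_indep:
  fixes F :: "(nat \<Rightarrow> 'z) \<Rightarrow> 'z \<Rightarrow> ennreal"
  assumes F: "(\<lambda>(x, z). F x z) \<in> borel_measurable (PiM J (\<lambda>_. P0) \<Otimes>\<^sub>M P0)"
    and J: "finite J" "i \<notin> J"
  shows "(\<integral>\<^sup>+\<omega>. F (restrict (\<lambda>j. Z j \<omega>) J) (Z i \<omega>) \<partial>M)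
           = (\<integral>\<^sup>+x. \<integral>\<^sup>+z. F x z \<partial>P0 \<partial>PiM J (\<lambda>_. P0))"
proof -
  interpret PS: product_prob_space "\<lambda>_::nat. P0" UNIV
    by (simp add: product_prob_space_def product_prob_space_axioms_def product_sigma_finite_def
        P0.sigma_finite_measure_axioms P0.prob_space_axioms)
  define K where "K = insert i J"
  have "(\<lambda>y. (restrict y J, y i)) \<in> measurable (PiM K (\<lambda>_. P0)) (PiM J (\<lambda>_. P0) \<Otimes>\<^sub>M P0)"
    unfolding K_def
    by (intro measurable_Pair measurable_restrict_subset measurable_component_singleton) auto
  from measurable_comp[OF this F]
  have G: "(\<lambda>y. F (restrict y J) (y i)) \<in> borel_measurable (PiM K (\<lambda>_. P0))"
    by (simp add: comp_def)
  have "(\<integral>\<^sup>+\<omega>. F (restrict (\<lambda>j. Z j \<omega>) J) (Z i \<omega>) \<partial>M)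
      = (\<integral>\<^sup>+\<omega>. (\<lambda>y. F (restrict y J) (y i)) (restrict (\<lambda>j. Z j \<omega>) K) \<partial>M)"
    by (simp add: K_def restrict_restrict Int_absorb1 subset_insertI)
  also have "\<dots> = (\<integral>\<^sup>+y. F (restrict y J) (y i)
                    \<partial>distr M (PiM K (\<lambda>_. P0)) (\<lambda>\<omega>. restrict (\<lambda>j. Z j \<omega>) K))"
    by (rule nn_integral_distr[symmetric, OF measurable_restrict_Z]) (use G in simp)
  also have "\<dots> = (\<integral>\<^sup>+y. F (restrict y J) (y i) \<partial>PiM K (\<lambda>_. P0))"
    by (simp add: distr_restrict_Z K_def)
  also have "\<dots> = (\<integral>\<^sup>+x. \<integral>\<^sup>+z. F (restrict (x(i := z)) J) ((x(i := z)) i) \<partial>P0 \<partial>PiM J (\<lambda>_. P0))"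
    using G unfolding K_def by (rule PS.product_nn_integral_insert[OF J])
  also have "\<dots> = (\<integral>\<^sup>+x. \<integral>\<^sup>+z. F x z \<partial>P0 \<partial>PiM J (\<lambda>_. P0))"
  proof (rule nn_integral_cong)
    fix x assume "x \<in> space (PiM J (\<lambda>_. P0))"
    then have "restrict (x(i := z)) J = x" for z
      using J(2) by (auto simp: space_PiM PiE_def extensional_def restrict_def fun_eq_iff)
    then show "(\<integral>\<^sup>+z. F (restrict (x(i := z)) J) ((x(i := z)) i) \<partial>P0) = (\<integral>\<^sup>+z. F x z \<partial>P0)"
      by simp
  qed
  finally show ?thesis .
qed

lemma nn_integral_cross_fit_indicator_le:
  fixes H :: "(nat \<Rightarrow> 'z) \<Rightarrow> 'z \<Rightarrow> real"
  assumes H: "(\<lambda>(x, z). H x z) \<in> borel_measurable (PiM J (\<lambda>_. P0) \<Otimes>\<^sub>M P0)"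
    and J: "finite J" "i \<notin> J"
  defines "L x \<equiv> \<integral>\<^sup>+z. ennreal (H x z) \<partial>P0"
  shows "(\<integral>\<^sup>+\<omega>. ennreal (H (restrict (\<lambda>j. Z j \<omega>) J) (Z i \<omega>))
            * indicator {x. L x \<le> \<delta>} (restrict (\<lambda>j. Z j \<omega>) J) \<partial>M) \<le> \<delta>"
proof -
  have H': "(\<lambda>p. H (fst p) (snd p)) \<in> borel_measurable (PiM J (\<lambda>_. P0) \<Otimes>\<^sub>M P0)"
    using H by (simp add: case_prod_beta')
  have L: "L \<in> borel_measurable (PiM J (\<lambda>_. P0))"
    unfolding L_def using H' by measurable
  have "(\<integral>\<^sup>+\<omega>. ennreal (H (restrict (\<lambda>j. Z j \<omega>) J) (Z i \<omega>))
            * indicator {x. L x \<le> \<delta>} (restrict (\<lambda>j. Z j \<omega>) J) \<partial>M)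
      = (\<integral>\<^sup>+x. \<integral>\<^sup>+z. ennreal (H x z) * indicator {x. L x \<le> \<delta>} x \<partial>P0 \<partial>PiM J (\<lambda>_. P0))"
    by (rule nn_integral_restrict_Z_indep[OF _ J]) (use H' L in measurable)
  also have "\<dots> = (\<integral>\<^sup>+x. L x * indicator {x. L x \<le> \<delta>} x \<partial>PiM J (\<lambda>_. P0))"
  proof (rule nn_integral_cong)
    fix x assume "x \<in> space (PiM J (\<lambda>_. P0))"
    then have [measurable]: "(\<lambda>z. H x z) \<in> borel_measurable P0"
      using measurable_Pair2[OF H'] by simp
    show "(\<integral>\<^sup>+z. ennreal (H x z) * indicator {x. L x \<le> \<delta>} x \<partial>P0) = L x * indicator {x. L x \<le> \<delta>} x"
      unfolding L_def by (rule nn_integral_multc) measurable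
  qed
  also have "\<dots> \<le> (\<integral>\<^sup>+x. \<delta> \<partial>PiM J (\<lambda>_. P0))"
    by (intro nn_integral_mono) (simp split: split_indicator)
  also have "\<dots> = \<delta>"
    by (simp add: prob_space.emeasure_space_1 prob_space_PiM P0.prob_space_axioms)
  finally show ?thesis .
qed

lemma emeasure_cross_fit_mean_gt_le:
  fixes H :: "(nat \<Rightarrow> 'z) \<Rightarrow> 'z \<Rightarrow> real"
  assumes H: "(\<lambda>(x, z). H x z) \<in> borel_measurable (PiM J (\<lambda>_. P0) \<Otimes>\<^sub>M P0)"
    and H_nonneg: "\<And>x z. 0 \<le> H x z" and J: "finite J" and IJ: "I \<inter> J = {}" and \<epsilon>: "\<epsilon> > 0"
  defines "L x \<equiv> \<integral>\<^sup>+z. ennreal (H x z) \<partial>P0"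
  shows "ennreal \<epsilon> * emeasure M {\<omega>\<in>space M.
           \<epsilon> < (\<Sum>i\<in>I. H (restrict (\<lambda>j. Z j \<omega>) J) (Z i \<omega>)) / real (card I)
           \<and> L (restrict (\<lambda>j. Z j \<omega>) J) \<le> \<delta>} \<le> \<delta>"
proof (cases "card I = 0")
  case True
  then show ?thesis using \<epsilon> by simp
next
  case False
  then have N: "real (card I) > 0" by simp
  define X where "X \<omega> = restrict (\<lambda>j. Z j \<omega>) J" for \<omega>
  define c where "c \<omega> = (indicator {x. L x \<le> \<delta>} (X \<omega>) :: ennreal)" for \<omega>
  define A where "A = {\<omega>\<in>space M. \<epsilon> < (\<Sum>i\<in>I. H (X \<omega>) (Z i \<omega>)) / real (card I) \<and> L (X \<omega>) \<le> \<delta>}"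
  have H': "(\<lambda>p. H (fst p) (snd p)) \<in> borel_measurable (PiM J (\<lambda>_. P0) \<Otimes>\<^sub>M P0)"
    using H by (simp add: case_prod_beta')
  have [measurable]: "L \<in> borel_measurable (PiM J (\<lambda>_. P0))"
    unfolding L_def using H' by measurable
  have [measurable]: "X \<in> measurable M (PiM J (\<lambda>_. P0))"
    unfolding X_def by (rule measurable_restrict_Z)
  have [measurable]: "(\<lambda>\<omega>. H (X \<omega>) (Z i \<omega>)) \<in> borel_measurable M" for i
    unfolding X_def by (rule measurable_comp_restrict_Z[OF H])
  have "ennreal \<epsilon> * emeasure M A = (\<integral>\<^sup>+\<omega>. ennreal \<epsilon> * indicator A \<omega> \<partial>M)"
    by (rule nn_integral_cmult_indicator[symmetric]) (simp add: A_def)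
  also have "\<dots> \<le> (\<integral>\<^sup>+\<omega>. ennreal (1 / real (card I)) * (\<Sum>i\<in>I. ennreal (H (X \<omega>) (Z i \<omega>)) * c \<omega>) \<partial>M)"
  proof (intro nn_integral_mono)
    fix \<omega> assume "\<omega> \<in> space M"
    have "ennreal \<epsilon> \<le> ennreal (1 / real (card I) * (\<Sum>i\<in>I. H (X \<omega>) (Z i \<omega>)))"
      if "\<epsilon> < (\<Sum>i\<in>I. H (X \<omega>) (Z i \<omega>)) / real (card I)"
      using that by (intro ennreal_leI) simp
    also have "\<dots> = ennreal (1 / real (card I)) * (\<Sum>i\<in>I. ennreal (H (X \<omega>) (Z i \<omega>)))"
      using H_nonneg by (subst ennreal_mult) (simp_all add: sum_nonneg sum_ennreal)
    finally show "ennreal \<epsilon> * indicator A \<omega>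
        \<le> ennreal (1 / real (card I)) * (\<Sum>i\<in>I. ennreal (H (X \<omega>) (Z i \<omega>)) * c \<omega>)"
      by (auto simp: A_def c_def indicator_def)
  qed
  also have "\<dots> = ennreal (1 / real (card I)) * (\<Sum>i\<in>I. \<integral>\<^sup>+\<omega>. ennreal (H (X \<omega>) (Z i \<omega>)) * c \<omega> \<partial>M)"
    by (simp add: nn_integral_cmult nn_integral_sum c_def)
  also have "\<dots> \<le> ennreal (1 / real (card I)) * (\<Sum>i\<in>I. \<delta>)"
  proof (intro mult_left_mono sum_mono)
    fix i assume "i \<in> I"
    with IJ have "i \<notin> J" by auto
    then show "(\<integral>\<^sup>+\<omega>. ennreal (H (X \<omega>) (Z i \<omega>)) * c \<omega> \<partial>M) \<le> \<delta>"
      unfolding c_def X_def L_def by (rule nn_integral_cross_fit_indicator_le[OF H J])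
  qed simp
  also have "\<dots> = \<delta>"
    using N
    by (simp add: ennreal_of_nat_eq_real_of_nat ennreal_mult[symmetric] mult.assoc[symmetric])
  finally show ?thesis unfolding A_def X_def .
qed

lemma measure_cross_fit_mean_gt_le:
  fixes H :: "(nat \<Rightarrow> 'z) \<Rightarrow> 'z \<Rightarrow> real"
  assumes H: "(\<lambda>(x, z). H x z) \<in> borel_measurable (PiM J (\<lambda>_. P0) \<Otimes>\<^sub>M P0)"
    and H_nonneg: "\<And>x z. 0 \<le> H x z" and J: "finite J" and IJ: "I \<inter> J = {}"
    and \<epsilon>: "\<epsilon> > 0" and \<delta>: "\<delta> > 0"
  shows "measure M {\<omega>\<in>space M. \<epsilon> < (\<Sum>i\<in>I. H (restrict (\<lambda>j. Z j \<omega>) J) (Z i \<omega>)) / real (card I)}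
    \<le> measure M {\<omega>\<in>space M. ennreal \<delta> < (\<integral>\<^sup>+z. ennreal (H (restrict (\<lambda>j. Z j \<omega>) J) z) \<partial>P0)} + \<delta> / \<epsilon>"
proof -
  define X where "X \<omega> = restrict (\<lambda>j. Z j \<omega>) J" for \<omega>
  define L where "L x = (\<integral>\<^sup>+z. ennreal (H x z) \<partial>P0)" for x
  define D where "D \<omega> = (\<Sum>i\<in>I. H (X \<omega>) (Z i \<omega>)) / real (card I)" for \<omega>
  define A where "A = {\<omega>\<in>space M. \<epsilon> < D \<omega> \<and> L (X \<omega>) \<le> ennreal \<delta>}"
  define B where "B = {\<omega>\<in>space M. ennreal \<delta> < L (X \<omega>)}"
  have H': "(\<lambda>p. H (fst p) (snd p)) \<in> borel_measurable (PiM J (\<lambda>_. P0) \<Otimes>\<^sub>M P0)"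
    using H by (simp add: case_prod_beta')
  have [measurable]: "L \<in> borel_measurable (PiM J (\<lambda>_. P0))"
    unfolding L_def using H' by measurable
  have [measurable]: "X \<in> measurable M (PiM J (\<lambda>_. P0))"
    unfolding X_def by (rule measurable_restrict_Z)
  have [measurable]: "D \<in> borel_measurable M"
    unfolding D_def X_def using measurable_comp_restrict_Z[OF H] by measurable
  have "ennreal \<epsilon> * emeasure M A \<le> ennreal \<delta>"
    unfolding A_def D_def X_def L_def by (rule emeasure_cross_fit_mean_gt_le[OF H H_nonneg J IJ \<epsilon>])
  then have "\<epsilon> * measure M A \<le> \<delta>"
    using \<epsilon> \<delta> by (simp add: emeasure_eq_measure ennreal_mult[symmetric] ennreal_le_iff)
  then have "measure M A \<le> \<delta> / \<epsilon>"
    using \<epsilon> by (simp add: field_simps)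
  moreover have "measure M {\<omega>\<in>space M. \<epsilon> < D \<omega>} \<le> measure M A + measure M B"
    by (rule measure_le_measure_Un) (auto simp: A_def B_def not_less)
  ultimately show ?thesis unfolding B_def D_def X_def L_def by simp
qed

lemma conv_in_prob_cross_fit_mean:
  fixes H :: "'n \<Rightarrow> (nat \<Rightarrow> 'z) \<Rightarrow> 'z \<Rightarrow> real"
  assumes H: "\<And>n. (\<lambda>(x, z). H n x z) \<in> borel_measurable (PiM (J n) (\<lambda>_. P0) \<Otimes>\<^sub>M P0)"
    and H_nonneg: "\<And>n x z. 0 \<le> H n x z" and J: "\<And>n. finite (J n)" and IJ: "\<And>n. I n \<inter> J n = {}"
    and cons: "op1_enn M F (\<lambda>n \<omega>. \<integral>\<^sup>+z. ennreal (H n (restrict (\<lambda>j. Z j \<omega>) (J n)) z) \<partial>P0)"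
  shows "conv_in_prob M F
           (\<lambda>n \<omega>. (\<Sum>i\<in>I n. H n (restrict (\<lambda>j. Z j \<omega>) (J n)) (Z i \<omega>)) / real (card (I n))) 0"
  unfolding conv_in_prob_def
proof (intro allI impI measure_tendsto_0I)
  fix \<epsilon> \<eta> :: real assume \<epsilon>: "\<epsilon> > 0" and \<eta>: "\<eta> > 0"
  define \<delta> where "\<delta> = \<eta> * \<epsilon> / 3"
  have \<delta>: "\<delta> > 0" unfolding \<delta>_def using \<eta> \<epsilon> by simp
  have "\<forall>\<^sub>F n in F. measure M {\<omega>\<in>space M.
      ennreal \<delta> < (\<integral>\<^sup>+z. ennreal (H n (restrict (\<lambda>j. Z j \<omega>) (J n)) z) \<partial>P0)} < \<eta>/2"
    using cons \<delta> \<eta> unfolding op1_enn_def by (intro order_tendstoD(2)) auto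
  then show "\<forall>\<^sub>F n in F. measure M {\<omega>\<in>space M. \<epsilon> <
      \<bar>(\<Sum>i\<in>I n. H n (restrict (\<lambda>j. Z j \<omega>) (J n)) (Z i \<omega>)) / real (card (I n)) - 0\<bar>} < \<eta>"
  proof eventually_elim
    case (elim n)
    have "measure M {\<omega>\<in>space M. \<epsilon> <
        \<bar>(\<Sum>i\<in>I n. H n (restrict (\<lambda>j. Z j \<omega>) (J n)) (Z i \<omega>)) / real (card (I n)) - 0\<bar>}
      = measure M {\<omega>\<in>space M.
          \<epsilon> < (\<Sum>i\<in>I n. H n (restrict (\<lambda>j. Z j \<omega>) (J n)) (Z i \<omega>)) / real (card (I n))}"
      by (simp add: abs_of_nonneg sum_nonneg H_nonneg)
    also have "\<dots> \<le> measure M {\<omega>\<in>space M.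
        ennreal \<delta> < (\<integral>\<^sup>+z. ennreal (H n (restrict (\<lambda>j. Z j \<omega>) (J n)) z) \<partial>P0)} + \<delta> / \<epsilon>"
      by (rule measure_cross_fit_mean_gt_le[OF H H_nonneg J IJ \<epsilon> \<delta>])
    also have "\<dots> < \<eta>"
      using elim \<epsilon> \<eta> unfolding \<delta>_def by simp
    finally show ?case .
  qed
qed

lemma conv_in_prob_cross_fit_empL2sq:
  fixes \<phi>0 :: "'z \<Rightarrow> 'h::{real_inner, second_countable_topology}"
    and g :: "'n \<Rightarrow> (nat \<Rightarrow> 'z) \<Rightarrow> 'z \<Rightarrow> 'h"
  assumes \<phi>0_meas [measurable]: "\<phi>0 \<in> borel_measurable P0" and \<phi>0_L2: "L2sq P0 \<phi>0 < \<infinity>"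
    and g_meas: "\<And>n. (\<lambda>(x, z). g n x z) \<in> borel_measurable (PiM (J n) (\<lambda>_. P0) \<Otimes>\<^sub>M P0)"
    and J: "\<And>n. finite (J n)" and I: "\<And>n. finite (I n)" and IJ: "\<And>n. I n \<inter> J n = {}"
    and card: "filterlim (\<lambda>n. card (I n)) at_top F"
    and cons: "op1_enn M F (\<lambda>n \<omega>. L2sq P0 (\<lambda>z. g n (restrict (\<lambda>j. Z j \<omega>) (J n)) z - \<phi>0 z))"
  shows "conv_in_prob M F (\<lambda>n \<omega>. empL2sq (I n) (\<lambda>i. Z i \<omega>) (g n (restrict (\<lambda>j. Z j \<omega>) (J n))))
           (enn2real (L2sq P0 \<phi>0))"
proof -
  define f where "f = (\<lambda>z. (norm (\<phi>0 z))\<^sup>2)"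
  have f_meas [measurable]: "f \<in> borel_measurable P0" unfolding f_def by measurable
  have f_L2: "(\<integral>\<^sup>+z. ennreal (f z) \<partial>P0) = L2sq P0 \<phi>0" unfolding f_def L2sq_def ..
  have f_int: "integrable P0 f"
    by (rule integrableI_bounded) (use \<phi>0_L2 f_L2 in \<open>simp_all add: f_def\<close>)
  have "(\<integral>z. f z \<partial>P0) = enn2real (L2sq P0 \<phi>0)"
    using integral_eq_nn_integral[OF f_meas] f_L2 by (simp add: f_def)
  then have emp_\<phi>0: "conv_in_prob M F (\<lambda>n \<omega>. empL2sq (I n) (\<lambda>i. Z i \<omega>) \<phi>0) (enn2real (L2sq P0 \<phi>0))"
    using conv_in_prob_sample_mean[OF f_meas _ f_int I card] by (simp add: empL2sq_def f_def)
  have err_meas: "\<And>n. (\<lambda>(x, z). g n x z - \<phi>0 z) \<in> borel_measurable (PiM (J n) (\<lambda>_. P0) \<Otimes>\<^sub>M P0)"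
    using g_meas by (simp add: case_prod_beta') measurable
  have emp_err: "conv_in_prob M F
      (\<lambda>n \<omega>. empL2sq (I n) (\<lambda>i. Z i \<omega>) (\<lambda>z. g n (restrict (\<lambda>j. Z j \<omega>) (J n)) z - \<phi>0 z)) 0"
    using conv_in_prob_cross_fit_mean[where H = "\<lambda>n x z. (norm (g n x z - \<phi>0 z))\<^sup>2", OF _ _ J IJ]
      err_meas cons
    by (simp add: empL2sq_def L2sq_def case_prod_beta')
  show ?thesis
  proof (rule conv_in_prob_perturb[OF prob_space_axioms _ _ _ emp_\<phi>0 emp_err])
    show "\<And>n. (\<lambda>\<omega>. empL2sq (I n) (\<lambda>i. Z i \<omega>) \<phi>0) \<in> borel_measurable M"
      using measurable_empL2sq_cross_fit[of "\<lambda>_. \<phi>0"] by simp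
    show "\<And>n. (\<lambda>\<omega>. empL2sq (I n) (\<lambda>i. Z i \<omega>) (\<lambda>z. g n (restrict (\<lambda>j. Z j \<omega>) (J n)) z - \<phi>0 z))
        \<in> borel_measurable M"
      using measurable_empL2sq_cross_fit[OF err_meas] by simp
  qed (rule empL2sq_diff_le)
qed

end

lemma filterlim_card_halves_even_seq:
  shows "filterlim (\<lambda>n. card {..<n div 2}) at_top even_seq"
    and "filterlim (\<lambda>n. card {n div 2..<n}) at_top even_seq"
proof -
  have "filterlim (\<lambda>n::nat. n div 2) at_top sequentially"
    unfolding filterlim_at_top eventually_sequentially
    by (metis div_le_mono div_mult_self1_is_m zero_less_numeral)
  moreover have "even_seq \<le> sequentially" unfolding even_seq_def by simp
  ultimately have half: "filterlim (\<lambda>n::nat. n div 2) at_top even_seq"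
    by (rule filterlim_mono[OF _ order_refl])
  then show "filterlim (\<lambda>n. card {..<n div 2}) at_top even_seq" by simp
  show "filterlim (\<lambda>n. card {n div 2..<n}) at_top even_seq"
    by (rule filterlim_at_top_mono[OF half]) (intro always_eventually allI, simp)
qed

theorem lemmaS14:
  fixes M :: "'a measure"
    and P0 :: "'z::polish_space measure"
    and Z :: "nat \<Rightarrow> 'a \<Rightarrow> 'z"
    and \<phi>0 :: "'z \<Rightarrow> 'h::{real_inner, polish_space}"
    and g1 g2 :: "nat \<Rightarrow> (nat \<Rightarrow> 'z) \<Rightarrow> 'z \<Rightarrow> 'h"
    and \<phi>1 \<phi>2 :: "nat \<Rightarrow> 'a \<Rightarrow> 'z \<Rightarrow> 'h"
  assumes M: "prob_space M"
    and P0: "prob_space P0" "sets P0 = sets borel"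
    and Z_indep: "prob_space.indep_vars M (\<lambda>_. P0) Z UNIV"
    and Z_distr: "\<And>i. distr M P0 (Z i) = P0"
    and \<phi>0_meas: "\<phi>0 \<in> borel_measurable P0"
    and g1_meas: "\<And>n. (\<lambda>(x, z). g1 n x z) \<in> borel_measurable (PiM {..<n div 2} (\<lambda>_. P0) \<Otimes>\<^sub>M P0)"
    and g2_meas: "\<And>n. (\<lambda>(x, z). g2 n x z) \<in> borel_measurable (PiM {n div 2..<n} (\<lambda>_. P0) \<Otimes>\<^sub>M P0)"
    and \<phi>1_def: "\<And>n \<omega>. \<phi>1 n \<omega> = g1 n (restrict (\<lambda>i. Z i \<omega>) {..<n div 2})"
    and \<phi>2_def: "\<And>n \<omega>. \<phi>2 n \<omega> = g2 n (restrict (\<lambda>i. Z i \<omega>) {n div 2..<n})"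
    and \<phi>0_L2: "L2sq P0 \<phi>0 < \<infinity>"
    and cons1: "op1_enn M even_seq (\<lambda>n \<omega>. L2sq P0 (\<lambda>z. \<phi>1 n \<omega> z - \<phi>0 z))"
    and cons2: "op1_enn M even_seq (\<lambda>n \<omega>. L2sq P0 (\<lambda>z. \<phi>2 n \<omega> z - \<phi>0 z))"
  shows "conv_in_prob M even_seq
           (\<lambda>n \<omega>. empL2sq {n div 2..<n} (\<lambda>i. Z i \<omega>) (\<phi>1 n \<omega>)) (enn2real (L2sq P0 \<phi>0))
       \<and> conv_in_prob M even_seq
           (\<lambda>n \<omega>. empL2sq {..<n div 2} (\<lambda>i. Z i \<omega>) (\<phi>2 n \<omega>)) (enn2real (L2sq P0 \<phi>0))
       \<and> conv_in_prob M even_seq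
           (\<lambda>n \<omega>. (1/2) * (empL2sq {n div 2..<n} (\<lambda>i. Z i \<omega>) (\<phi>1 n \<omega>)
                           + empL2sq {..<n div 2} (\<lambda>i. Z i \<omega>) (\<phi>2 n \<omega>)))
           (enn2real (L2sq P0 \<phi>0))"
proof -
  \<comment> \<open>\<open>prob_space P0\<close> already follows from \<open>Z_distr\<close>.\<close>
  interpret iid_sample M P0 Z
    using M Z_indep Z_distr by (simp add: iid_sample_def iid_sample_axioms_def)
  note halves = filterlim_card_halves_even_seq
  have fold1: "conv_in_prob M even_seq
      (\<lambda>n \<omega>. empL2sq {n div 2..<n} (\<lambda>i. Z i \<omega>) (\<phi>1 n \<omega>)) (enn2real (L2sq P0 \<phi>0))"
    unfolding \<phi>1_def
    by (rule conv_in_prob_cross_fit_empL2sq[OF \<phi>0_meas \<phi>0_L2 g1_meas _ _ _ halves(2)])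
       (use cons1 in \<open>auto simp: \<phi>1_def\<close>)
  have fold2: "conv_in_prob M even_seq
      (\<lambda>n \<omega>. empL2sq {..<n div 2} (\<lambda>i. Z i \<omega>) (\<phi>2 n \<omega>)) (enn2real (L2sq P0 \<phi>0))"
    unfolding \<phi>2_def
    by (rule conv_in_prob_cross_fit_empL2sq[OF \<phi>0_meas \<phi>0_L2 g2_meas _ _ _ halves(1)])
       (use cons2 in \<open>auto simp: \<phi>2_def\<close>)
  have "conv_in_prob M even_seq
      (\<lambda>n \<omega>. (1/2) * (empL2sq {n div 2..<n} (\<lambda>i. Z i \<omega>) (\<phi>1 n \<omega>)
                     + empL2sq {..<n div 2} (\<lambda>i. Z i \<omega>) (\<phi>2 n \<omega>)))
      (enn2real (L2sq P0 \<phi>0))"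
    by (rule conv_in_prob_midpoint[OF M _ _ fold1 fold2])
       (simp_all add: \<phi>1_def \<phi>2_def measurable_empL2sq_cross_fit[OF g1_meas]
         measurable_empL2sq_cross_fit[OF g2_meas])
  with fold1 fold2 show ?thesis by blast
qed

end
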